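(* Let $C$ be a locally optimal coloring of $E(K_n)$. Then for every color $i$ and every edge $uv$ of color $i$, we have $a_{u,i}+a_{v,i}\le 3$. Consequently every color class of $C$ is a vertex-disjoint union of single edges and paths with two edges.
   Context: A coloring is any map $C:E(K_n)\to\{1,\dots,n-1\}$, not necessarily proper ($n\ge 2$). For a vertex $u$ and color $\mu$, $a_{u,\mu}$ is the number of $\mu$-colored edges incident with $u$, and $\Psi(C)=\sum_{u,\mu}\binom{a_{u,\mu}}{2}$. A coloring $C$ is locally optimal if every coloring $C'$ that differs from $C$ on exactly one edge satisfies $\Psi(C')\ge \Psi(C)$. *)

theory Defs
  imports Main
begin

definition Kedges :: "nat \<Rightarrow> nat set set" where
  "Kedges n = {e. \<exists>u v. u < n \<and> v < n \<and> u \<noteq> v \<and> e = {u, v}}"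

text \<open>A coloring: every edge gets a color in {1..n-1} (not necessarily proper).\<close>
definition is_coloring :: "nat \<Rightarrow> (nat set \<Rightarrow> nat) \<Rightarrow> bool" where
  "is_coloring n C \<longleftrightarrow> (\<forall>e \<in> Kedges n. C e \<in> {1..n-1})"

definition adeg :: "nat \<Rightarrow> (nat set \<Rightarrow> nat) \<Rightarrow> nat \<Rightarrow> nat \<Rightarrow> nat" where
  "adeg n C u \<mu> = card {e \<in> Kedges n. u \<in> e \<and> C e = \<mu>}"

definition Psi :: "nat \<Rightarrow> (nat set \<Rightarrow> nat) \<Rightarrow> nat" where
  "Psi n C = (\<Sum>u<n. \<Sum>\<mu>\<in>{1..n-1}. adeg n C u \<mu> choose 2)"

definition locally_optimal :: "nat \<Rightarrow> (nat set \<Rightarrow> nat) \<Rightarrow> bool" where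
  "locally_optimal n C \<longleftrightarrow> is_coloring n C \<and>
     (\<forall>C'. is_coloring n C' \<and> card {e \<in> Kedges n. C' e \<noteq> C e} = 1 \<longrightarrow> Psi n C' \<ge> Psi n C)"

definition color_class :: "nat \<Rightarrow> (nat set \<Rightarrow> nat) \<Rightarrow> nat \<Rightarrow> nat set set" where
  "color_class n C i = {e \<in> Kedges n. C e = i}"

definition edge_or_P3 :: "nat set set \<Rightarrow> bool" where
  "edge_or_P3 p \<longleftrightarrow> (\<exists>a b. a \<noteq> b \<and> p = {{a, b}}) \<or>
     (\<exists>a b c. a \<noteq> b \<and> b \<noteq> c \<and> a \<noteq> c \<and> p = {{a, b}, {b, c}})"

end

theory Submission
  imports Defs
begin

text \<open>Recolouring an edge uv from its colour i to a colour j changes \<Psi> by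
  a_{u,j} + a_{v,j} - (a_{u,i} - 1) - (a_{v,i} - 1). The endpoints of uv meet 2(n - 1) edges,
  distributed over n - 1 colours; so if a_{u,i} + a_{v,i} \<ge> 4, some other colour j has
  a_{u,j} + a_{v,j} \<le> 1 and the recolouring strictly decreases \<Psi>. In a colour class where the
  endpoint degrees of every edge sum to at most 3, two edges at a common vertex already form a
  whole component, so every component is an edge or a path with two edges.\<close>

locale low_degree_edges =
  fixes E :: "nat set set"
  assumes finite_edges: "finite E"
    and edge_doubleton: "e \<in> E \<Longrightarrow> \<exists>u v. u \<noteq> v \<and> e = {u, v}"
    and degree_sum_le_3:
      "{u, v} \<in> E \<Longrightarrow> card {f \<in> E. u \<in> f} + card {f \<in> E. v \<in> f} \<le> 3"
begin

definition incident :: "nat \<Rightarrow> nat set set" where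
  "incident x = {f \<in> E. x \<in> f}"

definition touching :: "nat set \<Rightarrow> nat set set" where
  "touching e = {f \<in> E. f \<inter> e \<noteq> {}}"

lemma finite_incident: "finite (incident x)"
  unfolding incident_def using finite_edges by simp

lemma card_incident_ge_1:
  assumes "e \<in> E" "x \<in> e"
  shows "card (incident x) \<ge> 1"
  using assms finite_incident card_0_eq[of "incident x"] unfolding incident_def by fastforce

lemma card_incident_sum_le_3:
  assumes "{u, v} \<in> E"
  shows "card (incident u) + card (incident v) \<le> 3"
  using degree_sum_le_3[OF assms] unfolding incident_def .

lemma edge_other_end:
  assumes "e \<in> E" "x \<in> e"
  obtains y where "y \<noteq> x" "e = {x, y}"
  using edge_doubleton[OF assms(1)] assms(2) by fastforce

lemma touching_doubleton: "touching {u, v} = incident u \<union> incident v"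
  unfolding touching_def incident_def by auto

lemma incident_eq_singleton:
  assumes "e \<in> E" "x \<in> e" "card (incident x) \<le> 1"
  shows "incident x = {e}"
proof -
  have "e \<in> incident x" using assms unfolding incident_def by simp
  moreover have "\<forall>a\<in>incident x. \<forall>b\<in>incident x. a = b"
    using assms(3) card_le_Suc0_iff_eq[OF finite_incident] by simp
  ultimately show ?thesis by blast
qed

lemma incident_eq_pair:
  assumes "e \<in> E" "f \<in> E" "x \<in> e" "x \<in> f" "e \<noteq> f" "card (incident x) \<le> 2"
  shows "incident x = {e, f}"
proof -
  have "{e, f} \<subseteq> incident x" using assms unfolding incident_def by simp
  moreover have "card {e, f} = 2" using assms(5) by simp
  ultimately show ?thesis
    using assms(6) card_seteq[OF finite_incident, of "{e, f}"] by simp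
qed

text \<open>Two edges sharing a vertex x saturate the bound at both of their edges, so x has degree 2,
  their other ends have degree 1, and both edges touch exactly the pair itself.\<close>
lemma touching_eq_if_common_vertex:
  assumes e: "e \<in> E" and f: "f \<in> E" and x: "x \<in> e" "x \<in> f"
  shows "touching e = touching f"
proof (cases "e = f")
  case False
  obtain u where u: "u \<noteq> x" "e = {x, u}" using edge_other_end[OF e x(1)] .
  obtain w where w: "w \<noteq> x" "f = {x, w}" using edge_other_end[OF f x(2)] .
  have "{e, f} \<subseteq> incident x" using e f x unfolding incident_def by simp
  then have "card (incident x) \<ge> 2"
    using False finite_incident card_mono[of "incident x" "{e, f}"] by simp
  moreover have "card (incident x) + card (incident u) \<le> 3"
    and "card (incident x) + card (incident w) \<le> 3"
    using card_incident_sum_le_3 e f u w by simp_all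
  moreover have "card (incident u) \<ge> 1" "card (incident w) \<ge> 1"
    using card_incident_ge_1 e f u w by auto
  ultimately have "incident x = {e, f}" "incident u = {e}" "incident w = {f}"
    using incident_eq_pair[OF e f x False] incident_eq_singleton[OF e, of u]
      incident_eq_singleton[OF f, of w] u w by simp_all
  then show ?thesis using touching_doubleton[of x u] touching_doubleton[of x w] u w by auto
qed simp

lemma edge_or_P3_touching:
  assumes e: "e \<in> E"
  shows "edge_or_P3 (touching e)"
proof -
  have cherry: "edge_or_P3 (touching e)"
    if a: "card (incident a) = 2" and b: "card (incident b) = 1" and ab: "a \<noteq> b" "e = {a, b}"
    for a b
  proof -
    have "e \<in> incident a" using e ab unfolding incident_def by simp
    then obtain f where f: "f \<in> incident a" "f \<noteq> e"
      using a by (metis card_2_iff insertCI)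
    then have fE: "f \<in> E" "a \<in> f" unfolding incident_def by auto
    obtain w where w: "w \<noteq> a" "f = {a, w}" using edge_other_end[OF fE] .
    have "incident a = {e, f}"
      using incident_eq_pair[OF e fE(1) _ fE(2)] ab f(2) a by simp
    moreover have "incident b = {e}" using incident_eq_singleton[OF e, of b] ab b by simp
    ultimately have "touching e = {{b, a}, {a, w}}"
      using touching_doubleton[of a b] ab w by (auto simp: insert_commute)
    moreover have "w \<noteq> b" using w f(2) ab by auto
    ultimately show ?thesis unfolding edge_or_P3_def using w ab by blast
  qed
  obtain u v where uv: "u \<noteq> v" "e = {u, v}" using edge_doubleton[OF e] by blast
  have "card (incident u) \<ge> 1" "card (incident v) \<ge> 1"
    using card_incident_ge_1[OF e] uv by auto
  moreover have "card (incident u) + card (incident v) \<le> 3"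
    using card_incident_sum_le_3 e uv by simp
  ultimately consider "card (incident u) = 1" "card (incident v) = 1"
    | "card (incident u) = 2" "card (incident v) = 1"
    | "card (incident u) = 1" "card (incident v) = 2"
    by linarith
  then show ?thesis
  proof cases
    case 1
    then have "touching e = {{u, v}}"
      using incident_eq_singleton[OF e, of u] incident_eq_singleton[OF e, of v]
        touching_doubleton[of u v] uv by simp
    then show ?thesis unfolding edge_or_P3_def using uv by blast
  next
    case 2
    then show ?thesis using cherry[of u v] uv by simp
  next
    case 3
    then show ?thesis using cherry[of v u] uv by (simp add: insert_commute)
  qed
qed

lemma touching_self: "e \<in> E \<Longrightarrow> e \<in> touching e"
  using edge_doubleton unfolding touching_def by fastforce

lemma disjoint_touching:
  assumes e: "e \<in> E" and e': "e' \<in> E" and ne: "touching e \<noteq> touching e'"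
  shows "\<Union>(touching e) \<inter> \<Union>(touching e') = {}"
proof (rule ccontr)
  assume "\<Union>(touching e) \<inter> \<Union>(touching e') \<noteq> {}"
  then obtain y g g' where g: "g \<in> touching e" "y \<in> g" and g': "g' \<in> touching e'" "y \<in> g'"
    by blast
  have "touching g = touching e"
    using g touching_eq_if_common_vertex[OF _ e] unfolding touching_def by blast
  moreover have "touching g' = touching e'"
    using g' touching_eq_if_common_vertex[OF _ e'] unfolding touching_def by blast
  moreover have "touching g = touching g'"
    using g g' touching_eq_if_common_vertex unfolding touching_def by blast
  ultimately show False using ne by simp
qed

theorem decomposition:
  "\<exists>P. \<Union>P = E \<and> (\<forall>p\<in>P. edge_or_P3 p) \<and> (\<forall>p\<in>P. \<forall>q\<in>P. p \<noteq> q \<longrightarrow> \<Union>p \<inter> \<Union>q = {})"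
proof (intro exI conjI)
  show "\<Union>(touching ` E) = E"
    using touching_self unfolding touching_def by blast
  show "\<forall>p\<in>touching ` E. edge_or_P3 p" using edge_or_P3_touching by blast
  show "\<forall>p\<in>touching ` E. \<forall>q\<in>touching ` E. p \<noteq> q \<longrightarrow> \<Union>p \<inter> \<Union>q = {}"
    using disjoint_touching by blast
qed

end

lemma finite_Kedges: "finite (Kedges n)"
proof (rule finite_subset)
  show "Kedges n \<subseteq> Pow {..<n}" unfolding Kedges_def by auto
qed simp

lemma doubleton_in_Kedges_iff: "{u, v} \<in> Kedges n \<longleftrightarrow> u < n \<and> v < n \<and> u \<noteq> v"
  unfolding Kedges_def by (auto simp: doubleton_eq_iff)

lemma card_incident_Kedges:
  assumes "x < n"
  shows "card {e \<in> Kedges n. x \<in> e} = n - 1"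
proof -
  have "{e \<in> Kedges n. x \<in> e} = (\<lambda>w. {x, w}) ` ({..<n} - {x})"
    unfolding Kedges_def using assms by auto
  moreover have "inj_on (\<lambda>w. {x, w}) ({..<n} - {x})"
    by (auto simp: inj_on_def doubleton_eq_iff)
  ultimately show ?thesis using assms by (simp add: card_image)
qed

lemma sum_adeg:
  assumes "is_coloring n C" "x < n"
  shows "(\<Sum>\<mu>\<in>{1..n-1}. adeg n C x \<mu>) = n - 1"
proof -
  have "{e \<in> Kedges n. x \<in> e} = (\<Union>\<mu>\<in>{1..n-1}. {e \<in> Kedges n. x \<in> e \<and> C e = \<mu>})"
    using assms(1) unfolding is_coloring_def by auto
  also have "card \<dots> = (\<Sum>\<mu>\<in>{1..n-1}. adeg n C x \<mu>)"
    unfolding adeg_def by (rule card_UN_disjoint) (auto simp: finite_Kedges)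
  finally show ?thesis using card_incident_Kedges[OF assms(2)] by simp
qed

lemma adeg_recolor_unchanged:
  assumes "x \<notin> e \<or> (\<mu> \<noteq> C e \<and> \<mu> \<noteq> j)"
  shows "adeg n (C(e := j)) x \<mu> = adeg n C x \<mu>"
proof -
  have "{f \<in> Kedges n. x \<in> f \<and> (C(e := j)) f = \<mu>} = {f \<in> Kedges n. x \<in> f \<and> C f = \<mu>}"
    using assms by auto
  then show ?thesis unfolding adeg_def by simp
qed

lemma adeg_recolor_old:
  assumes "e \<in> Kedges n" "x \<in> e" "C e \<noteq> j"
  shows "Suc (adeg n (C(e := j)) x (C e)) = adeg n C x (C e)"
proof -
  have "{f \<in> Kedges n. x \<in> f \<and> (C(e := j)) f = C e} = {f \<in> Kedges n. x \<in> f \<and> C f = C e} - {e}"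
    using assms by auto
  moreover have "e \<in> {f \<in> Kedges n. x \<in> f \<and> C f = C e}" using assms by simp
  ultimately show ?thesis unfolding adeg_def
    using card_Suc_Diff1[of "{f \<in> Kedges n. x \<in> f \<and> C f = C e}" e] by (simp add: finite_Kedges)
qed

lemma adeg_recolor_new:
  assumes "e \<in> Kedges n" "x \<in> e" "C e \<noteq> j"
  shows "adeg n (C(e := j)) x j = Suc (adeg n C x j)"
proof -
  have "{f \<in> Kedges n. x \<in> f \<and> (C(e := j)) f = j} = insert e {f \<in> Kedges n. x \<in> f \<and> C f = j}"
    using assms by auto
  moreover have "e \<notin> {f \<in> Kedges n. x \<in> f \<and> C f = j}" using assms by simp
  ultimately show ?thesis unfolding adeg_def by (simp add: finite_Kedges)
qed

text \<open>Pointwise in the colour, this is (a + 1 choose 2) = (a choose 2) + a.\<close>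
lemma vertex_term_recolor:
  assumes e: "e \<in> Kedges n" and x: "x \<in> e" and ij: "C e \<noteq> j"
    and M: "C e \<in> M" "j \<in> M" "finite M"
  shows "(\<Sum>\<mu>\<in>M. adeg n (C(e := j)) x \<mu> choose 2) + (adeg n C x (C e) - 1)
       = (\<Sum>\<mu>\<in>M. adeg n C x \<mu> choose 2) + adeg n C x j"
proof -
  let ?a = "adeg n C x" and ?a' = "adeg n (C(e := j)) x"
  have "(?a' \<mu> choose 2) + (if \<mu> = C e then ?a \<mu> - 1 else 0)
      = (?a \<mu> choose 2) + (if \<mu> = j then ?a \<mu> else 0)" for \<mu>
  proof -
    consider "\<mu> = C e" | "\<mu> = j" | "\<mu> \<noteq> C e" "\<mu> \<noteq> j" by blast
    then show ?thesis
    proof cases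
      case 1
      then show ?thesis
        using adeg_recolor_old[where C = C, OF e x ij, symmetric] ij by (simp add: numeral_2_eq_2)
    next
      case 2
      then show ?thesis
        using adeg_recolor_new[where C = C, OF e x ij] ij by (simp add: numeral_2_eq_2)
    qed (simp add: adeg_recolor_unchanged)
  qed
  then have "(\<Sum>\<mu>\<in>M. (?a' \<mu> choose 2) + (if \<mu> = C e then ?a \<mu> - 1 else 0))
      = (\<Sum>\<mu>\<in>M. (?a \<mu> choose 2) + (if \<mu> = j then ?a \<mu> else 0))"
    by simp
  then show ?thesis using M by (simp add: sum.distrib)
qed

lemma Psi_recolor:
  assumes uv: "{u, v} \<in> Kedges n" and ij: "C {u, v} \<noteq> j"
    and M: "C {u, v} \<in> {1..n-1}" "j \<in> {1..n-1}"
  shows "Psi n (C({u, v} := j)) + (adeg n C u (C {u, v}) - 1) + (adeg n C v (C {u, v}) - 1)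
       = Psi n C + adeg n C u j + adeg n C v j"
proof -
  let ?e = "{u, v}" and ?M = "{1..n-1}"
  let ?term = "\<lambda>D x. \<Sum>\<mu>\<in>?M. adeg n D x \<mu> choose 2"
  let ?old = "\<lambda>x. adeg n C x (C ?e) - 1" and ?new = "\<lambda>x. adeg n C x j"
  have un: "u < n" "v < n" "u \<noteq> v" using uv doubleton_in_Kedges_iff by auto
  have "?term (C(?e := j)) x + (if x \<in> ?e then ?old x else 0)
      = ?term C x + (if x \<in> ?e then ?new x else 0)" for x
    using vertex_term_recolor[where C = C, OF uv _ ij M] adeg_recolor_unchanged[of x ?e] by auto
  then have "(\<Sum>x<n. ?term (C(?e := j)) x + (if x \<in> ?e then ?old x else 0))
      = (\<Sum>x<n. ?term C x + (if x \<in> ?e then ?new x else 0))"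
    by simp
  moreover have "(\<Sum>x<n. if x \<in> ?e then f x else 0) = f u + f v" for f :: "nat \<Rightarrow> nat"
  proof -
    have "(\<Sum>x<n. if x \<in> ?e then f x else 0) = sum f ({..<n} \<inter> ?e)"
      by (simp add: sum.inter_restrict)
    also have "{..<n} \<inter> ?e = ?e" using un by auto
    finally show ?thesis using un by simp
  qed
  ultimately show ?thesis unfolding Psi_def sum.distrib by simp
qed

lemma exists_rare_colour_at_edge:
  assumes col: "is_coloring n C" and uv: "{u, v} \<in> Kedges n" and i: "i \<in> {1..n-1}"
    and big: "adeg n C u i + adeg n C v i \<ge> 4"
  obtains j where "j \<in> {1..n-1}" "j \<noteq> i" "adeg n C u j + adeg n C v j \<le> 1"
proof (rule ccontr)
  let ?M = "{1..n-1}" and ?s = "\<lambda>\<mu>. adeg n C u \<mu> + adeg n C v \<mu>"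
  assume "\<not> thesis"
  then have "\<forall>\<mu>\<in>?M - {i}. 2 \<le> ?s \<mu>" using that by force
  then have "2 * (n - 2) \<le> (\<Sum>\<mu>\<in>?M - {i}. ?s \<mu>)"
    using sum_mono[of "?M - {i}" "\<lambda>_. 2" ?s] i by simp
  moreover have "(\<Sum>\<mu>\<in>?M. ?s \<mu>) = ?s i + (\<Sum>\<mu>\<in>?M - {i}. ?s \<mu>)"
    using i by (simp add: sum.remove)
  moreover have "(\<Sum>\<mu>\<in>?M. ?s \<mu>) = 2 * (n - 1)"
    using sum_adeg[OF col] uv doubleton_in_Kedges_iff by (simp add: sum.distrib)
  moreover have "n \<ge> 2" using uv doubleton_in_Kedges_iff by auto
  ultimately show False using big by linarith
qed

lemma adeg_edge_le_3_if_locally_optimal: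
  assumes lo: "locally_optimal n C" and uv: "{u, v} \<in> Kedges n"
  shows "adeg n C u (C {u, v}) + adeg n C v (C {u, v}) \<le> 3"
proof (rule ccontr)
  let ?i = "C {u, v}"
  assume "\<not> ?thesis"
  then have big: "adeg n C u ?i + adeg n C v ?i \<ge> 4" by simp
  have col: "is_coloring n C" using lo unfolding locally_optimal_def by simp
  then have i: "?i \<in> {1..n-1}" using uv unfolding is_coloring_def by blast
  obtain j where j: "j \<in> {1..n-1}" "j \<noteq> ?i" and rare: "adeg n C u j + adeg n C v j \<le> 1"
    using exists_rare_colour_at_edge[OF col uv i big] .
  let ?C' = "C({u, v} := j)"
  have "is_coloring n ?C'" using col j unfolding is_coloring_def by simp
  moreover have "{e \<in> Kedges n. ?C' e \<noteq> C e} = {{u, v}}" using uv j by auto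
  ultimately have "Psi n ?C' \<ge> Psi n C" using lo unfolding locally_optimal_def by simp
  moreover have "Psi n ?C' + (adeg n C u ?i - 1) + (adeg n C v ?i - 1)
      = Psi n C + adeg n C u j + adeg n C v j"
    using Psi_recolor[where C = C, OF uv _ i j(1)] j(2) by auto
  ultimately show False using big rare by linarith
qed

theorem lemma1:
  fixes n :: nat and C :: "nat set \<Rightarrow> nat"
  assumes "n \<ge> 2" and "locally_optimal n C"
  shows "(\<forall>i u v. {u, v} \<in> Kedges n \<and> C {u, v} = i \<longrightarrow> adeg n C u i + adeg n C v i \<le> 3)
       \<and> (\<forall>i. \<exists>P. \<Union>P = color_class n C i \<and> (\<forall>p\<in>P. edge_or_P3 p)
                 \<and> (\<forall>p\<in>P. \<forall>q\<in>P. p \<noteq> q \<longrightarrow> \<Union>p \<inter> \<Union>q = {}))"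
proof (intro conjI allI impI)
  show "adeg n C u i + adeg n C v i \<le> 3" if "{u, v} \<in> Kedges n \<and> C {u, v} = i" for i u v
    using adeg_edge_le_3_if_locally_optimal[OF assms(2)] that by blast
  fix i
  have incident_class: "{f \<in> color_class n C i. x \<in> f} = {e \<in> Kedges n. x \<in> e \<and> C e = i}" for x
    unfolding color_class_def by auto
  interpret low_degree_edges "color_class n C i"
  proof
    show "finite (color_class n C i)" unfolding color_class_def by (simp add: finite_Kedges)
    show "\<exists>u v. u \<noteq> v \<and> e = {u, v}" if "e \<in> color_class n C i" for e
      using that unfolding color_class_def Kedges_def by auto
    show "card {f \<in> color_class n C i. u \<in> f} + card {f \<in> color_class n C i. v \<in> f} \<le> 3"
      if "{u, v} \<in> color_class n C i" for u v
      using that adeg_edge_le_3_if_locally_optimal[OF assms(2), of u v]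
      unfolding incident_class adeg_def by (simp add: color_class_def)
  qed
  show "\<exists>P. \<Union>P = color_class n C i \<and> (\<forall>p\<in>P. edge_or_P3 p)
      \<and> (\<forall>p\<in>P. \<forall>q\<in>P. p \<noteq> q \<longrightarrow> \<Union>p \<inter> \<Union>q = {})"
    by (rule decomposition)
qed

end
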